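(* Let $p,q$ be distinct odd primes, and let $C$, $E'$ be as defined in the context, with $C'=C\cap E'$. If $C=C'$, then $p<q$.
   Context: $\zeta_p=e^{2i\pi/p}$, $E=\mathbb{Z}[\zeta_p,1/p]^*=\{u(1-\zeta_p)^k: u\in\mathbb{Z}[\zeta_p]^*,k\in\mathbb{Z}\}$. $C=\{u\in E: u=\frac{1-\zeta_p^i}{1-\zeta_p^j}\,\omega\,(1-\zeta_p)^k$, $\omega$ a root of unity, $i,j\in\mathbb{N}$ (with the quotient defined), $k\in\mathbb{Z}\}$ (the cyclotomic $p$-units). Let $H=\{\alpha\in\mathbb{Q}(\zeta_p)^*: v_{\mathfrak r}(\alpha)\equiv0\pmod q$ for every prime ideal $\mathfrak r\neq(1-\zeta_p)$ of $\mathbb{Z}[\zeta_p]\}/\mathbb{Q}(\zeta_p)^{*q}$, $H'=\{[\alpha]\in H: \alpha=\beta^q+q^2\gamma$ with $\beta,\gamma\in\mathbb{Z}[\zeta_p,1/p]$, $\beta$ invertible modulo $q^2\mathbb{Z}[\zeta_p,1/p]\}$, and $E'=\{u\in E: [u]\in H'\}$. *)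

theory Defs
  imports Complex_Main "HOL-Computational_Algebra.Primes"
begin

definition zeta :: "nat \<Rightarrow> complex" where
  "zeta p = cis (2 * pi / real p)"

definition Zz :: "nat \<Rightarrow> complex set" where
  "Zz p = {(\<Sum>k<n. of_int (a k) * zeta p ^ k) | a n. True}"

definition Zzp :: "nat \<Rightarrow> complex set" where
  "Zzp p = {x / of_nat p ^ n | x n. x \<in> Zz p}"

definition Qz :: "nat \<Rightarrow> complex set" where
  "Qz p = {(\<Sum>k<n. of_rat (a k) * zeta p ^ k) | a n. True}"

definition Eunits :: "nat \<Rightarrow> complex set" where
  "Eunits p = {u \<in> Zzp p. \<exists>v \<in> Zzp p. u * v = 1}"

definition Ccyc :: "nat \<Rightarrow> complex set" where
  "Ccyc p = {u \<in> Eunits p. \<exists>i j :: nat. \<exists>\<omega> :: complex. \<exists>k :: int.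
      1 - zeta p ^ j \<noteq> 0 \<and> (\<exists>n>0. \<omega> ^ n = 1) \<and>
      u = (1 - zeta p ^ i) / (1 - zeta p ^ j) * \<omega> * (1 - zeta p) powi k}"

text \<open>The condition defining H': the class of alpha contains a representative
  beta^q + q^2 gamma with beta, gamma in Z[zeta_p,1/p] and beta invertible modulo q^2.\<close>
definition in_H' :: "nat \<Rightarrow> nat \<Rightarrow> complex \<Rightarrow> bool" where
  "in_H' p q \<alpha> \<longleftrightarrow> (\<exists>\<delta> \<in> Qz p. \<delta> \<noteq> 0 \<and>
      (\<exists>\<beta> \<in> Zzp p. \<exists>\<gamma> \<in> Zzp p.
         \<alpha> * \<delta> ^ q = \<beta> ^ q + (of_nat q)^2 * \<gamma> \<and>
         (\<exists>\<beta>' \<in> Zzp p. \<exists>\<eta> \<in> Zzp p. \<beta> * \<beta>' - 1 = (of_nat q)^2 * \<eta>)))"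

text \<open>E' = units whose class lies in H' (for units the valuation condition of H is automatic).\<close>
definition Eprime :: "nat \<Rightarrow> nat \<Rightarrow> complex set" where
  "Eprime p q = {u \<in> Eunits p. in_H' p q u}"

end

(*
  Suppose q < p and let \<zeta> = zeta p, R = \<int>[\<zeta>,1/p]. The cyclotomic unit
  \<alpha> = 1 + \<zeta>^q = (1 - \<zeta>^(2q)) / (1 - \<zeta>^q) lies in C, hence in E', and the Frobenius congruence
  gives \<alpha> \<equiv> (1 + \<zeta>)^q modulo q. As q^(p-1) \<equiv> 1 modulo p, every x in R satisfies
  x^(q^(p-1)) \<equiv> x modulo q, so x \<mapsto> x^q is injective modulo q. With this, and since x \<equiv> y
  modulo q implies x^q \<equiv> y^q modulo q\<^sup>2, the H'-representation \<alpha> \<delta>^q = \<beta>^q + q\<^sup>2 \<gamma> upgrades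
  the congruence to \<alpha> \<equiv> (1 + \<zeta>)^q modulo q\<^sup>2, i.e. p^m ((1 + \<zeta>)^q - 1 - \<zeta>^q) = q\<^sup>2 W(\<zeta>)
  for an integer polynomial W. Since \<Phi>_p is irreducible (Eisenstein) and q - 1 \<le> p - 2, this
  identity holds coefficientwise once W is reduced modulo \<Phi>_p; at X it gives q | p^m.
*)
theory Submission
  imports Defs "HOL-Computational_Algebra.Polynomial" "HOL-Number_Theory.Cong"
begin

section \<open>Congruences and Frobenius in subrings\<close>

locale comm_subring =
  fixes R :: "'a :: {idom, ring_char_0} set"
  assumes add_closed: "x \<in> R \<Longrightarrow> y \<in> R \<Longrightarrow> x + y \<in> R"
    and mult_closed: "x \<in> R \<Longrightarrow> y \<in> R \<Longrightarrow> x * y \<in> R"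
    and uminus_closed: "x \<in> R \<Longrightarrow> - x \<in> R"
    and of_int_closed: "of_int c \<in> R"
begin

lemma zero_closed: "0 \<in> R"
  using of_int_closed[of 0] by simp

lemma one_closed: "1 \<in> R"
  using of_int_closed[of 1] by simp

lemma of_nat_closed: "of_nat n \<in> R"
  using of_int_closed[of "int n"] by simp

lemma diff_closed: "x \<in> R \<Longrightarrow> y \<in> R \<Longrightarrow> x - y \<in> R"
  using add_closed[of x "- y"] uminus_closed[of y] by simp

lemma power_closed: "x \<in> R \<Longrightarrow> x ^ n \<in> R"
  by (induction n) (simp_all add: one_closed mult_closed)

lemma sum_closed: "(\<And>i. i \<in> A \<Longrightarrow> f i \<in> R) \<Longrightarrow> sum f A \<in> R"
  by (induction A rule: infinite_finite_induct) (simp_all add: zero_closed add_closed)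

lemma poly_of_int_closed: "w \<in> R \<Longrightarrow> poly (map_poly of_int P) w \<in> R"
  by (induction P) (simp_all add: map_poly_pCons zero_closed add_closed mult_closed of_int_closed)

text \<open>Congruence modulo the ideal \<open>m R\<close>; the modulus comes first so that calculational
  chains \<open>also ... finally\<close> work on the congruent terms.\<close>
definition cong_mod :: "'a \<Rightarrow> 'a \<Rightarrow> 'a \<Rightarrow> bool" where
  "cong_mod m x y \<longleftrightarrow> (\<exists>w\<in>R. x - y = m * w)"

lemma cong_modI: "w \<in> R \<Longrightarrow> x - y = m * w \<Longrightarrow> cong_mod m x y"
  unfolding cong_mod_def by blast

lemma cong_modE:
  assumes "cong_mod m x y"
  obtains w where "w \<in> R" "x - y = m * w"
  using assms unfolding cong_mod_def by blast

lemma cong_mod_refl [simp]: "cong_mod m x x"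
  by (rule cong_modI[OF zero_closed]) simp

lemma cong_mod_sym: "cong_mod m x y \<Longrightarrow> cong_mod m y x"
proof (elim cong_modE)
  fix w assume "w \<in> R" "x - y = m * w"
  then show ?thesis by (intro cong_modI[of "- w"]) (auto simp: uminus_closed algebra_simps)
qed

lemma cong_mod_add:
  "cong_mod m a b \<Longrightarrow> cong_mod m c d \<Longrightarrow> cong_mod m (a + c) (b + d)"
proof (elim cong_modE)
  fix w1 w2 assume "w1 \<in> R" "a - b = m * w1" "w2 \<in> R" "c - d = m * w2"
  then show ?thesis by (intro cong_modI[of "w1 + w2"]) (auto simp: add_closed algebra_simps)
qed

lemma cong_mod_trans [trans]: "cong_mod m x y \<Longrightarrow> cong_mod m y z \<Longrightarrow> cong_mod m x z"
  using cong_mod_add[of m x y y z] by (simp add: cong_mod_def)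

lemma cong_mod_mult:
  assumes "cong_mod m a b" "cong_mod m c d" "b \<in> R" "c \<in> R"
  shows "cong_mod m (a * c) (b * d)"
proof -
  obtain w1 where w1: "w1 \<in> R" "a - b = m * w1" using assms(1) by (rule cong_modE)
  obtain w2 where w2: "w2 \<in> R" "c - d = m * w2" using assms(2) by (rule cong_modE)
  have "a * c - b * d = (a - b) * c + b * (c - d)" by (simp add: algebra_simps)
  also have "\<dots> = m * (w1 * c + b * w2)" by (simp add: w1 w2 algebra_simps)
  finally show ?thesis
    by (rule cong_modI[rotated]) (intro add_closed mult_closed w1 w2 assms)
qed

lemma cong_mod_power:
  assumes "cong_mod m x y" "x \<in> R" "y \<in> R"
  shows "cong_mod m (x ^ n) (y ^ n)"
  by (induction n) (simp_all add: cong_mod_mult assms power_closed)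

lemma cong_mod_sum:
  "(\<And>i. i \<in> A \<Longrightarrow> cong_mod m (f i) (g i)) \<Longrightarrow> cong_mod m (sum f A) (sum g A)"
  by (induction A rule: infinite_finite_induct) (simp_all add: cong_mod_add)

lemma cong_mod_mult_modulus: "cong_mod (m * k) x y \<Longrightarrow> k \<in> R \<Longrightarrow> cong_mod m x y"
proof (elim cong_modE)
  fix w assume "k \<in> R" "w \<in> R" "x - y = m * k * w"
  then show ?thesis by (intro cong_modI[of "k * w"]) (auto simp: mult_closed algebra_simps)
qed

lemma cong_mod_of_int:
  assumes "[c = d] (mod m)"
  shows "cong_mod (of_int m) (of_int c) (of_int d)"
proof -
  obtain k where "c - d = m * k" using assms unfolding cong_iff_dvd_diff by (elim dvdE)
  then have "of_int c - of_int d = of_int m * (of_int k :: 'a)" by (metis of_int_diff of_int_mult)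
  then show ?thesis by (rule cong_modI[OF of_int_closed])
qed

lemma of_nat_invertible_mod:
  assumes "coprime M n"
  obtains c where "cong_mod (of_nat n) (of_nat M * of_int c) 1"
proof -
  obtain c where "[int M * c = 1] (mod int n)"
    using assms cong_solve_coprime_int[of "int M" "int n"] by auto
  then have "cong_mod (of_int (int n)) (of_int (int M * c)) (of_int 1)" by (rule cong_mod_of_int)
  then show ?thesis using that by simp
qed

lemma cong_mod_cancel:
  assumes "cong_mod m (x * c) (y * c)" "cong_mod m (c * c') 1" "x \<in> R" "y \<in> R" "c' \<in> R"
  shows "cong_mod m x y"
proof -
  obtain w1 where w1: "w1 \<in> R" "x * c - y * c = m * w1" using assms(1) by (rule cong_modE)
  obtain w2 where w2: "w2 \<in> R" "c * c' - 1 = m * w2" using assms(2) by (rule cong_modE)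
  have "x - y = (x * c - y * c) * c' - (x - y) * (c * c' - 1)" by (simp add: algebra_simps)
  also have "\<dots> = m * (w1 * c' - (x - y) * w2)" unfolding w1(2) w2(2) by (simp add: algebra_simps)
  finally show ?thesis
    by (rule cong_modI[rotated]) (intro diff_closed mult_closed w1 w2 assms)
qed

text \<open>The cofactor \<open>\<Sum>i<n. y^(n-1-i) x^i\<close> of \<open>x - y\<close> in \<open>x^n - y^n\<close> is
  congruent to \<open>n y^(n-1)\<close>, hence to \<open>0\<close>, modulo \<open>n\<close>.\<close>
lemma cong_mod_power_lift:
  assumes "x \<in> R" "y \<in> R" "cong_mod (of_nat n) x y"
  shows "cong_mod ((of_nat n)^2) (x ^ n) (y ^ n)"
proof -
  obtain w where w: "w \<in> R" "x - y = of_nat n * w" using assms(3) by (rule cong_modE)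
  define S where "S = (\<Sum>i<n. y^(n - Suc i) * x^i)"
  have "cong_mod (of_nat n) S (\<Sum>i<n. y^(n - Suc i) * y^i)"
    unfolding S_def
    by (intro cong_mod_sum cong_mod_mult cong_mod_refl cong_mod_power assms power_closed)
  also have "(\<Sum>i<n. y^(n - Suc i) * y^i) = of_nat n * y^(n - 1)"
    by (simp add: power_add[symmetric])
  finally obtain w' where w': "w' \<in> R" "S - of_nat n * y^(n - 1) = of_nat n * w'"
    by (rule cong_modE)
  have "x^n - y^n = (x - y) * S" unfolding S_def by (rule power_diff_sumr2)
  also have "\<dots> = (of_nat n)^2 * (w * (y^(n - 1) + w'))"
    using w(2) w'(2) by (simp add: algebra_simps power2_eq_square eq_diff_eq)
  finally show ?thesis
    by (rule cong_modI[rotated]) (intro mult_closed add_closed power_closed w w' assms)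
qed

text \<open>Since \<open>v^N - v = (u - u^N) v^(N+1)\<close> when \<open>u v = 1\<close>.\<close>
lemma cong_mod_power_inverse:
  assumes "u * v = 1" "v \<in> R" "cong_mod m (u ^ N) u"
  shows "cong_mod m (v ^ N) v"
proof -
  obtain w where w: "w \<in> R" "u ^ N - u = m * w" using assms(3) by (rule cong_modE)
  have "v ^ N - v = - (u ^ N - u) * v ^ (N + 1)"
    using assms(1) by (simp add: algebra_simps power_mult_distrib[symmetric])
  also have "\<dots> = m * (- w * v ^ (N + 1))" by (simp add: w(2))
  finally show ?thesis
    by (rule cong_modI[rotated]) (intro mult_closed uminus_closed power_closed w assms)
qed

lemma frobenius_add:
  assumes q: "prime q" and xy: "x \<in> R" "y \<in> R"
  shows "cong_mod (of_nat q) ((x + y) ^ q) (x ^ q + y ^ q)"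
proof -
  have q1: "q \<ge> 1" using prime_gt_0_nat[OF q] by simp
  define f where "f k = of_nat (q choose k) * x^k * y^(q-k)" for k
  define g where "g k = of_nat ((q choose k) div q) * x^k * y^(q-k)" for k
  have "(x + y) ^ q = (\<Sum>k\<in>insert 0 (insert q {1..<q}). f k)"
    unfolding f_def binomial_ring using q1 by (intro sum.cong) auto
  also have "\<dots> = y ^ q + (x ^ q + (\<Sum>k\<in>{1..<q}. f k))"
    using q1 by (simp add: f_def)
  also have "(\<Sum>k\<in>{1..<q}. f k) = of_nat q * (\<Sum>k\<in>{1..<q}. g k)"
    unfolding sum_distrib_left
  proof (rule sum.cong)
    fix k assume "k \<in> {1..<q}"
    then have "q dvd (q choose k)" using q by (intro dvd_choose_prime) auto
    then have "(of_nat (q choose k) :: 'a) = of_nat q * of_nat ((q choose k) div q)"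
      by (metis dvd_mult_div_cancel of_nat_mult)
    then show "f k = of_nat q * g k" unfolding f_def g_def by simp
  qed simp
  finally have "(x + y) ^ q - (x ^ q + y ^ q) = of_nat q * (\<Sum>k\<in>{1..<q}. g k)" by simp
  then show ?thesis unfolding g_def
    by (rule cong_modI[rotated]) (intro sum_closed mult_closed power_closed of_nat_closed xy)
qed

lemma frobenius_power_add:
  assumes q: "prime q" and xy: "x \<in> R" "y \<in> R"
  shows "cong_mod (of_nat q) ((x + y) ^ q ^ j) (x ^ q ^ j + y ^ q ^ j)"
proof (induction j)
  case (Suc j)
  have "(x + y) ^ q ^ Suc j = ((x + y) ^ q ^ j) ^ q"
    by (simp add: power_mult[symmetric] mult.commute)
  also have "cong_mod (of_nat q) \<dots> ((x ^ q ^ j + y ^ q ^ j) ^ q)"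
    using Suc xy by (intro cong_mod_power add_closed power_closed)
  also have "cong_mod (of_nat q) \<dots> ((x ^ q ^ j) ^ q + (y ^ q ^ j) ^ q)"
    using xy by (intro frobenius_add q power_closed)
  also have "(x ^ q ^ j) ^ q + (y ^ q ^ j) ^ q = x ^ q ^ Suc j + y ^ q ^ Suc j"
    by (simp add: power_mult[symmetric] mult.commute)
  finally show ?case .
qed simp

lemma frobenius_of_nat:
  assumes q: "prime q"
  shows "cong_mod (of_nat q) (of_nat n ^ q ^ j) (of_nat n)"
proof (induction n)
  case (Suc n)
  have "cong_mod (of_nat q) ((of_nat n + 1) ^ q ^ j) (of_nat n ^ q ^ j + 1 ^ q ^ j)"
    by (intro frobenius_power_add q of_nat_closed one_closed)
  also have "cong_mod (of_nat q) (of_nat n ^ q ^ j + 1 ^ q ^ j) (of_nat n + 1)"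
    using Suc by (simp add: cong_mod_add)
  finally show ?case by (simp add: add.commute)
qed (use prime_gt_0_nat[OF q] in \<open>simp add: zero_power\<close>)

lemma frobenius_of_int:
  assumes q: "prime q"
  shows "cong_mod (of_nat q) (of_int c ^ q ^ j) (of_int c)"
proof -
  define n where "n = nat (c mod int q)"
  have "[c = int n] (mod int q)"
    using prime_gt_0_nat[OF q] by (simp add: n_def cong_def)
  then have c: "cong_mod (of_nat q) (of_int c) (of_nat n)"
    using cong_mod_of_int by fastforce
  then have "cong_mod (of_nat q) (of_int c ^ q ^ j) (of_nat n ^ q ^ j)"
    by (intro cong_mod_power of_int_closed of_nat_closed)
  also have "cong_mod (of_nat q) \<dots> (of_nat n)" by (rule frobenius_of_nat[OF q])
  also have "cong_mod (of_nat q) \<dots> (of_int c)" using c by (rule cong_mod_sym)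
  finally show ?thesis .
qed

lemma frobenius_poly:
  assumes q: "prime q" and w: "w \<in> R" "cong_mod (of_nat q) (w ^ q ^ j) w"
  shows "cong_mod (of_nat q) (poly (map_poly of_int P) w ^ q ^ j) (poly (map_poly of_int P) w)"
proof (induction P)
  case (pCons a P)
  let ?v = "poly (map_poly of_int P) w"
  have "cong_mod (of_nat q) ((of_int a + w * ?v) ^ q ^ j) (of_int a ^ q ^ j + (w * ?v) ^ q ^ j)"
    using w by (intro frobenius_power_add q of_int_closed mult_closed poly_of_int_closed)
  also have "(w * ?v) ^ q ^ j = w ^ q ^ j * ?v ^ q ^ j" by (rule power_mult_distrib)
  also have "cong_mod (of_nat q) (of_int a ^ q ^ j + w ^ q ^ j * ?v ^ q ^ j) (of_int a + w * ?v)"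
    using w pCons.IH
    by (intro cong_mod_add cong_mod_mult frobenius_of_int q poly_of_int_closed power_closed)
  finally show ?case by (simp add: map_poly_pCons)
qed (use frobenius_of_int[OF q, of 0 j] in simp)

end

lemma comm_subring_UNIV: "comm_subring UNIV"
  by unfold_locales auto

lemma fermat_little:
  fixes a p :: nat
  assumes p: "prime p" and a: "\<not> p dvd a"
  shows "[a ^ (p - 1) = 1] (mod p)"
proof -
  have "comm_subring.cong_mod UNIV (of_nat p) (of_nat a ^ p ^ 1) (of_nat a :: int)"
    by (rule comm_subring.frobenius_of_nat[OF comm_subring_UNIV p])
  then have "int p dvd int a ^ p - int a"
    by (simp add: comm_subring.cong_mod_def[OF comm_subring_UNIV] dvd_def)
  also have "int a ^ p - int a = int a * (int a ^ (p - 1) - 1)"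
    using prime_gt_0_nat[OF p] by (simp add: right_diff_distrib power_eq_if)
  finally have "int p dvd int a * (int a ^ (p - 1) - 1)" .
  then have "int p dvd int a ^ (p - 1) - 1"
    using p a by (simp add: prime_dvd_mult_iff)
  then have "[int (a ^ (p - 1)) = int 1] (mod int p)" by (simp add: cong_iff_dvd_diff)
  then show ?thesis by (rule cong_int_iff[THEN iffD1])
qed

locale frobenius_subring = comm_subring +
  fixes q k :: nat
  assumes prime_q: "prime q" and k_pos: "k > 0"
    and frobenius_fixed: "x \<in> R \<Longrightarrow> cong_mod (of_nat q) (x ^ q ^ k) x"
begin

lemma frobenius_inj:
  assumes "x \<in> R" "y \<in> R" "cong_mod (of_nat q) (x ^ q) (y ^ q)"
  shows "cong_mod (of_nat q) x y"
proof -
  have qk: "q ^ k = q * q ^ (k - 1)" using k_pos by (simp add: power_eq_if)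
  have "cong_mod (of_nat q) x (x ^ q ^ k)" using assms by (intro cong_mod_sym[OF frobenius_fixed])
  also have "x ^ q ^ k = (x ^ q) ^ q ^ (k - 1)" by (simp add: qk power_mult)
  also have "cong_mod (of_nat q) \<dots> ((y ^ q) ^ q ^ (k - 1))"
    by (rule cong_mod_power[OF assms(3)]) (simp_all add: power_closed assms)
  also have "(y ^ q) ^ q ^ (k - 1) = y ^ q ^ k" by (simp add: qk power_mult)
  also have "cong_mod (of_nat q) \<dots> y" using assms by (intro frobenius_fixed)
  finally show ?thesis .
qed

text \<open>Induction on \<open>a\<close>: \<open>d^q \<equiv> 0\<close> modulo \<open>q\<close> forces \<open>d \<equiv> 0\<close> by injectivity of Frobenius.\<close>
lemma qth_power_divisible:
  assumes "\<alpha> * v = 1" "v \<in> R" "d \<in> R" "Y \<in> R" "\<alpha> * d ^ q = (of_nat q) ^ (a * q) * Y"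
  shows "\<exists>e\<in>R. d = (of_nat q) ^ a * e"
  using assms(3,5)
proof (induction a arbitrary: d)
  case 0
  then show ?case by auto
next
  case (Suc a)
  have q1: "q \<ge> 1" using prime_gt_0_nat[OF prime_q] by simp
  have qz: "(of_nat q :: 'a) \<noteq> 0" using q1 by simp
  have "d ^ q = v * (\<alpha> * d ^ q)" using assms(1) by (simp add: algebra_simps)
  also have "\<dots> = v * ((of_nat q) ^ Suc (q - 1 + a * q) * Y)"
    using q1 by (simp add: Suc.prems(2))
  also have "\<dots> = of_nat q * (v * (of_nat q) ^ (q - 1 + a * q) * Y)"
    by (simp only: power_Suc mult_ac)
  finally have "cong_mod (of_nat q) (d ^ q) (0 ^ q)"
    using q1 by (intro cong_modI[of "v * (of_nat q) ^ (q - 1 + a * q) * Y"])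
      (simp_all add: mult_closed power_closed of_nat_closed assms)
  then have "cong_mod (of_nat q) d 0" by (rule frobenius_inj[OF Suc.prems(1) zero_closed])
  then obtain d1 where d1: "d1 \<in> R" "d = of_nat q * d1" by (elim cong_modE) simp
  have "(of_nat q) ^ q * (\<alpha> * d1 ^ q) = \<alpha> * d ^ q"
    unfolding d1(2) by (simp add: power_mult_distrib ac_simps)
  also have "\<dots> = (of_nat q) ^ q * ((of_nat q) ^ (a * q) * Y)"
    unfolding Suc.prems(2) by (simp add: power_add)
  finally have "\<alpha> * d1 ^ q = (of_nat q) ^ (a * q) * Y" using qz by simp
  then obtain e where "e \<in> R" "d1 = (of_nat q) ^ a * e" using Suc.IH d1(1) by blast
  then show ?case using d1(2) by (intro bexI[of _ e]) simp_all
qed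

text \<open>Frobenius injectivity gives \<open>u e \<equiv> b\<close> modulo \<open>q\<close>, hence \<open>(u e)^q \<equiv> b^q \<equiv> \<alpha> e^q\<close> modulo
  \<open>q\<^sup>2\<close>; and \<open>e^q\<close> is invertible modulo \<open>q\<^sup>2\<close> with inverse \<open>\<alpha> b'^q\<close>.\<close>
lemma qth_power_cong_lift:
  assumes R: "\<alpha> \<in> R" "u \<in> R" "e \<in> R" "b \<in> R" "b' \<in> R"
    and cong_q: "cong_mod (of_nat q) \<alpha> (u ^ q)"
    and cong_q2: "cong_mod ((of_nat q)^2) (\<alpha> * e ^ q) (b ^ q)"
    and inverse: "cong_mod ((of_nat q)^2) (b * b') 1"
  shows "cong_mod ((of_nat q)^2) (u ^ q) \<alpha>"
proof -
  have "cong_mod (of_nat q) ((u * e) ^ q) (\<alpha> * e ^ q)"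
    unfolding power_mult_distrib using R
    by (intro cong_mod_mult[OF cong_mod_sym[OF cong_q] cong_mod_refl] power_closed)
  also have "cong_mod (of_nat q) \<dots> (b ^ q)"
    using cong_mod_mult_modulus[of "of_nat q" "of_nat q"] cong_q2
    by (simp add: power2_eq_square of_nat_closed)
  finally have "cong_mod (of_nat q) (u * e) b"
    by (rule frobenius_inj[rotated 2]) (simp_all add: R mult_closed)
  then have "cong_mod ((of_nat q)^2) ((u * e) ^ q) (b ^ q)"
    by (rule cong_mod_power_lift[rotated 2]) (simp_all add: R mult_closed)
  also have "cong_mod ((of_nat q)^2) (b ^ q) (\<alpha> * e ^ q)"
    using cong_q2 by (rule cong_mod_sym)
  finally have cancel: "cong_mod ((of_nat q)^2) (u ^ q * e ^ q) (\<alpha> * e ^ q)"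
    by (simp add: power_mult_distrib)
  have "e ^ q * (\<alpha> * b' ^ q) = (\<alpha> * e ^ q) * b' ^ q" by (simp add: ac_simps)
  also have "cong_mod ((of_nat q)^2) \<dots> (b ^ q * b' ^ q)"
    by (rule cong_mod_mult[OF cong_q2 cong_mod_refl]) (simp_all add: R power_closed)
  also have "b ^ q * b' ^ q = (b * b') ^ q" by (simp add: power_mult_distrib)
  also have "cong_mod ((of_nat q)^2) \<dots> (1 ^ q)"
    by (rule cong_mod_power[OF inverse]) (simp_all add: R mult_closed one_closed)
  finally have unit: "cong_mod ((of_nat q)^2) (e ^ q * (\<alpha> * b' ^ q)) 1"
    by simp
  show ?thesis
    by (rule cong_mod_cancel[OF cancel unit]) (simp_all add: R power_closed mult_closed)
qed

end

section \<open>Irreducibility of the cyclotomic polynomial \<open>\<Phi>\<^sub>p\<close>\<close>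

lemma map_poly_of_int_add [simp]: "map_poly of_int (P + Q) = map_poly of_int P + map_poly of_int Q"
  by (rule poly_eqI) (simp add: coeff_map_poly)

lemma map_poly_of_int_diff [simp]: "map_poly of_int (P - Q) = map_poly of_int P - map_poly of_int Q"
  by (rule poly_eqI) (simp add: coeff_map_poly)

lemma map_poly_of_int_mult [simp]:
  "(map_poly of_int (P * Q) :: 'a :: comm_ring_1 poly) = map_poly of_int P * map_poly of_int Q"
  by (rule poly_eqI) (simp add: coeff_map_poly coeff_mult)

lemma map_poly_of_int_power [simp]:
  "(map_poly of_int (P ^ n) :: 'a :: comm_ring_1 poly) = map_poly of_int P ^ n"
  by (induction n) simp_all

lemma map_poly_of_int_sum [simp]:
  "map_poly of_int (sum f A) = (\<Sum>i\<in>A. map_poly of_int (f i))"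
  by (induction A rule: infinite_finite_induct) simp_all

lemma map_poly_of_int_smult [simp]: "map_poly of_int (smult c P) = smult (of_int c) (map_poly of_int P)"
  by (rule poly_eqI) (simp add: coeff_map_poly)

lemma map_poly_of_int_pCons [simp]: "map_poly of_int (pCons c P) = pCons (of_int c) (map_poly of_int P)"
  by (simp add: map_poly_pCons)

lemma map_poly_of_int_monom [simp]: "map_poly of_int (monom c n) = monom (of_int c) n"
  by (simp add: map_poly_monom)

lemma eisenstein_criterion:
  fixes A B :: "int poly" and r :: int
  assumes r: "prime r"
    and low: "\<forall>j<degree (A * B). r dvd coeff (A * B) j"
    and lead: "\<not> r dvd lead_coeff (A * B)"
    and const: "\<not> r^2 dvd coeff (A * B) 0"
  shows "degree A = 0 \<or> degree B = 0"
proof (rule ccontr)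
  assume "\<not> (degree A = 0 \<or> degree B = 0)"
  then have dA: "degree A \<ge> 1" and dB: "degree B \<ge> 1" by auto
  then have "A \<noteq> 0" "B \<noteq> 0" by auto
  then have degAB: "degree (A * B) = degree A + degree B" by (rule degree_mult_eq)
  have lA: "\<not> r dvd lead_coeff A" and lB: "\<not> r dvd lead_coeff B"
    using lead by (auto simp: lead_coeff_mult)
  define i where "i = (LEAST i. \<not> r dvd coeff A i)"
  define j where "j = (LEAST j. \<not> r dvd coeff B j)"
  have iA: "\<not> r dvd coeff A i" and ile: "i \<le> degree A"
    unfolding i_def by (rule LeastI[of _ "degree A"], rule lA, rule Least_le, rule lA)
  have jB: "\<not> r dvd coeff B j" and jle: "j \<le> degree B"
    unfolding j_def by (rule LeastI[of _ "degree B"], rule lB, rule Least_le, rule lB)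
  have below_i: "r dvd coeff A k" if "k < i" for k using not_less_Least[of k] that unfolding i_def by blast
  have below_j: "r dvd coeff B k" if "k < j" for k using not_less_Least[of k] that unfolding j_def by blast
  have "coeff (A * B) (i + j) = coeff A i * coeff B j + (\<Sum>k\<in>{..i+j}-{i}. coeff A k * coeff B (i+j-k))"
    unfolding coeff_mult by (subst sum.remove[of _ i]) auto
  moreover have "r dvd (\<Sum>k\<in>{..i+j}-{i}. coeff A k * coeff B (i+j-k))"
  proof (rule dvd_sum)
    fix k assume "k \<in> {..i+j}-{i}"
    then have "k < i \<or> i+j-k < j" by auto
    then show "r dvd coeff A k * coeff B (i+j-k)" using below_i below_j by auto
  qed
  moreover have "\<not> r dvd coeff A i * coeff B j" using iA jB r prime_dvd_mult_iff by blast
  ultimately have "\<not> r dvd coeff (A * B) (i + j)" by (simp add: dvd_add_left_iff)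
  then have "i + j \<ge> degree (A * B)" using low by (meson not_le)
  then have "i = degree A" "j = degree B" using degAB ile jle by auto
  then have "r dvd coeff A 0" "r dvd coeff B 0" using below_i below_j dA dB by auto
  then have "r^2 dvd coeff A 0 * coeff B 0" by (simp add: power2_eq_square mult_dvd_mono)
  then show False using const by (simp add: coeff_mult)
qed

definition Phi :: "nat \<Rightarrow> int poly" where
  "Phi n = (\<Sum>k<n. monom 1 k)"

lemma coeff_Phi: "coeff (Phi n) k = (if k < n then 1 else 0)"
  by (simp add: Phi_def coeff_sum coeff_monom)

lemma degree_Phi: "n \<ge> 1 \<Longrightarrow> degree (Phi n) = n - 1"
  by (intro le_antisym degree_le le_degree) (auto simp: coeff_Phi)

lemma lead_coeff_Phi: "n \<ge> 1 \<Longrightarrow> lead_coeff (Phi n) = 1"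
  by (simp add: degree_Phi coeff_Phi)

lemma Phi_nonzero: "n \<ge> 1 \<Longrightarrow> Phi n \<noteq> 0"
  using lead_coeff_Phi by fastforce

lemma content_Phi: "n \<ge> 1 \<Longrightarrow> content (Phi n) = 1"
  using content_dvd_coeff[of "Phi n" "n - 1"] normalize_content[of "Phi n"]
  by (simp add: coeff_Phi is_unit_normalize)

lemma poly_Phi_root:
  fixes w :: "'a :: field"
  assumes "w ^ n = 1" "w \<noteq> 1"
  shows "poly (map_poly of_int (Phi n)) w = 0"
  using assms by (simp add: Phi_def poly_sum poly_monom geometric_sum)

lemma pcompose_monom_one: "pcompose (monom (1 :: 'a :: comm_ring_1) k) r = r ^ k"
  by (simp add: pcompose_altdef map_poly_monom poly_monom one_pCons)

lemma coeff_Phi_shift: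
  assumes "n \<ge> 1"
  shows "coeff (pcompose (Phi n) [:1, 1:]) j = int (n choose Suc j)"
proof -
  have "coeff (pcompose (Phi n) [:1, 1:]) j = (\<Sum>k<n. coeff ([:1, 1:] ^ k) j)"
    by (simp add: Phi_def pcompose_sum coeff_sum pcompose_monom_one)
  also have "\<dots> = (\<Sum>k\<le>n - 1. int (k choose j))"
  proof (rule sum.cong)
    fix k
    show "coeff ([:1, 1:] ^ k) j = int (k choose j)"
    proof (cases "j \<le> k")
      case False
      have "degree ([:1, 1 :: int:] ^ k) \<le> k" using degree_power_le[of "[:1, 1 :: int:]" k] by simp
      then show ?thesis using False by (simp add: coeff_eq_0)
    qed (simp add: coeff_linear_poly_power)
  qed (use assms in auto)
  also have "\<dots> = int (n choose Suc j)" using assms by (simp flip: of_nat_sum add: sum_choose_upper)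
  finally show ?thesis .
qed

text \<open>Eisenstein at \<open>p\<close> for \<open>Phi p (X + 1)\<close>, whose coefficients are \<open>p choose (j+1)\<close>.\<close>
lemma Phi_prime_factorization_trivial:
  assumes p: "prime p" and AB: "Phi p = A * B"
  shows "degree A = 0 \<or> degree B = 0"
proof -
  have p1: "p \<ge> 1" using prime_gt_0_nat[OF p] by simp
  define AB' where "AB' = pcompose (Phi p) [:1, 1:]"
  have AB': "AB' = pcompose A [:1, 1:] * pcompose B [:1, 1:]"
    unfolding AB'_def AB by (simp add: pcompose_mult)
  have degAB': "degree AB' = p - 1" unfolding AB'_def using degree_Phi[OF p1] by (simp add: degree_pcompose)
  have "degree (pcompose A [:1, 1:]) = 0 \<or> degree (pcompose B [:1, 1:]) = 0"
  proof (rule eisenstein_criterion[of "int p"], unfold AB'[symmetric])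
    show "prime (int p)" using p by simp
    show "\<forall>j<degree AB'. int p dvd coeff AB' j"
    proof (intro allI impI)
      fix j assume "j < degree AB'"
      then have "p dvd (p choose Suc j)" using p degAB' by (intro dvd_choose_prime) auto
      then show "int p dvd coeff AB' j" by (simp add: AB'_def coeff_Phi_shift[OF p1])
    qed
    show "\<not> int p dvd lead_coeff AB'"
      unfolding degAB' using p1 prime_gt_1_nat[OF p] by (simp add: AB'_def coeff_Phi_shift)
    have "\<not> int p * int p dvd int p * 1" using prime_gt_1_nat[OF p] by simp
    then show "\<not> (int p)^2 dvd coeff AB' 0"
      unfolding AB'_def coeff_Phi_shift[OF p1] by (simp add: power2_eq_square)
  qed
  then show ?thesis by (simp add: degree_pcompose)
qed

lemma primitive_part_dvd_of_dvd_smult: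
  fixes T P :: "int poly"
  assumes "T dvd smult c P" "c \<noteq> 0" "content P = 1"
  shows "primitive_part T dvd P"
proof -
  have "primitive_part T dvd primitive_part (smult c P)"
    using assms(1) by (rule primitive_part_dvd_primitive_partI)
  also have "primitive_part (smult c P) = smult (unit_factor c) P"
    using primitive_part_prim[OF assms(3)] by (simp add: primitive_part_smult)
  finally have "primitive_part T dvd smult (unit_factor c) (smult (unit_factor c) P)"
    by (rule dvd_smult)
  then show ?thesis using assms(2) by (cases "c > 0") (auto simp: smult_smult)
qed

text \<open>A nonzero integer polynomial of least degree vanishing at \<open>w\<close> divides \<open>Phi p\<close>
  up to a constant; its primitive part would then be a proper factor of \<open>Phi p\<close>.\<close>
lemma no_root_of_small_degree:
  fixes w :: complex and U :: "int poly"
  assumes p: "prime p" and w: "w ^ p = 1" "w \<noteq> 1"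
    and U: "U \<noteq> 0" "degree U < p - 1"
  shows "poly (map_poly of_int U) w \<noteq> 0"
proof
  assume U_root: "poly (map_poly of_int U) w = 0"
  then obtain T :: "int poly" where T: "T \<noteq> 0" "poly (map_poly of_int T) w = 0"
    and least: "\<And>T'. T' \<noteq> 0 \<Longrightarrow> poly (map_poly of_int T') w = 0 \<Longrightarrow> degree T \<le> degree T'"
    using U ex_has_least_nat[of "\<lambda>T. T \<noteq> 0 \<and> poly (map_poly of_int T) w = 0" U degree] by blast
  have p1: "p \<ge> 1" using prime_gt_0_nat[OF p] by simp
  have "degree T \<noteq> 0"
  proof
    assume "degree T = 0"
    then obtain a where "T = [:a:]" by (rule degree_eq_zeroE)
    then show False using T by simp
  qed
  then have degT: "1 \<le> degree T" "degree T < p - 1"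
    using least[OF U(1) U_root] U(2) by auto
  obtain S Rm where div: "pseudo_divmod (Phi p) T = (S, Rm)" by (metis surj_pair)
  define c where "c = lead_coeff T ^ (Suc (degree (Phi p)) - degree T)"
  have c: "c \<noteq> 0" using T(1) by (simp add: c_def)
  have eq: "smult c (Phi p) = T * S + Rm" and Rm: "Rm = 0 \<or> degree Rm < degree T"
    unfolding c_def by (rule pseudo_divmod[OF T(1) div])+
  have "poly (map_poly of_int Rm) w = 0"
    using arg_cong[OF eq, of "\<lambda>P. poly (map_poly of_int P) w"] poly_Phi_root[OF w] T(2) by simp
  then have "Rm = 0" using Rm least[of Rm] by (cases "Rm = 0") auto
  then have "T dvd smult c (Phi p)" using eq by simp
  then have "primitive_part T dvd Phi p"
    using c content_Phi[OF p1] by (rule primitive_part_dvd_of_dvd_smult)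
  then obtain B where B: "Phi p = primitive_part T * B" by (elim dvdE)
  have "B \<noteq> 0" using B Phi_nonzero[OF p1] by auto
  then have "degree B \<ge> 1"
    using B degT degree_Phi[OF p1] T(1) by (simp add: degree_mult_eq)
  then show False using Phi_prime_factorization_trivial[OF p B] degT by simp
qed

text \<open>Reduce \<open>W\<close> modulo \<open>Phi p\<close>; the resulting relation has degree \<open>< p - 1\<close>, so it
  holds coefficientwise, and the coefficients of \<open>X\<close> give \<open>p^m q = q\<^sup>2 c\<close>.\<close>
lemma binomial_not_divisible:
  fixes w :: complex and W :: "int poly"
  assumes p: "prime p" and q: "prime q" and qp: "q + 2 \<le> p" and w: "w ^ p = 1" "w \<noteq> 1"
  shows "of_nat p ^ m * ((1 + w) ^ q - 1 - w ^ q) \<noteq> (of_nat q)^2 * poly (map_poly of_int W) w"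
proof
  assume eq: "of_nat p ^ m * ((1 + w) ^ q - 1 - w ^ q) = (of_nat q)^2 * poly (map_poly of_int W) w"
  have p1: "p \<ge> 1" and q2: "q \<ge> 2" using prime_gt_0_nat[OF p] prime_ge_2_nat[OF q] by auto
  obtain W1 W2 where W: "pseudo_divmod W (Phi p) = (W1, W2)" by (metis surj_pair)
  have W12: "W = Phi p * W1 + W2" and degW2: "W2 = 0 \<or> degree W2 < p - 1"
    using pseudo_divmod[OF Phi_nonzero[OF p1] W] p1 by (simp_all add: coeff_Phi degree_Phi)
  define B :: "int poly" where "B = [:1, 1:] ^ q - 1 - monom 1 q"
  define L where "L = smult (int p ^ m) B - smult (int q ^ 2) W2"
  have "poly (map_poly of_int L) w = 0"
    using eq poly_Phi_root[OF w] by (simp add: L_def B_def W12 poly_monom)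
  moreover have "degree L < p - 1"
  proof -
    have "degree B \<le> q"
      unfolding B_def using degree_power_le[of "[:1, 1 :: int:]" q]
      by (intro degree_diff_le) (auto simp: degree_monom_le)
    then show ?thesis
      unfolding L_def using degW2 qp degree_smult_le[of "int p ^ m" B]
        degree_smult_le[of "int q ^ 2" W2] by (intro degree_diff_less) auto
  qed
  ultimately have "L = 0" using no_root_of_small_degree[OF p w, of L] by auto
  then have "coeff L 1 = 0" by simp
  then have "int p ^ m * int q = (int q * coeff W2 1) * int q"
    using q2 by (simp add: L_def B_def coeff_linear_poly_power coeff_monom power2_eq_square)
  then have "int p ^ m = int q * coeff W2 1" using q2 by simp
  then have "q dvd p ^ m" by (metis dvd_triv_left of_nat_dvd_iff of_nat_power)
  then have "q dvd p" using q prime_dvd_power by blast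
  then show False using primes_dvd_imp_eq[OF q p] qp by simp
qed

section \<open>The ring \<open>\<int>[\<zeta>,1/p]\<close>\<close>

lemma zeta_pow: "zeta p ^ k = cis (2 * pi * real k / real p)"
  by (simp add: zeta_def DeMoivre mult_ac)

lemma zeta_pow_eq_1_iff:
  assumes "p > 0"
  shows "zeta p ^ k = 1 \<longleftrightarrow> p dvd k"
proof
  assume "p dvd k"
  then obtain j where "k = p * j" by blast
  then have "2 * pi * real k / real p = 2 * pi * real j" using assms by simp
  then show "zeta p ^ k = 1" by (simp add: zeta_pow)
next
  assume "zeta p ^ k = 1"
  then have "cos (2 * pi * real k / real p) = 1"
    by (simp add: zeta_pow complex_eq_iff)
  then obtain n :: int where "2 * pi * real k / real p = n * 2 * pi" by (auto simp: cos_one_2pi_int)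
  then have "real k = real_of_int n * real p" using assms by (simp add: field_simps)
  then have "int k = n * int p" by (metis of_int_eq_iff of_int_mult of_int_of_nat_eq)
  then show "p dvd k" by (metis dvd_triv_right int_dvd_int_iff)
qed

lemma zeta_pow_cong:
  assumes "p > 0" "[k = l] (mod p)"
  shows "zeta p ^ k = zeta p ^ l"
proof -
  have mod: "zeta p ^ n = zeta p ^ (n mod p)" for n
  proof -
    have "zeta p ^ n = (zeta p ^ p) ^ (n div p) * zeta p ^ (n mod p)"
      unfolding power_mult[symmetric] power_add[symmetric] by simp
    then show ?thesis using zeta_pow_eq_1_iff[OF assms(1), of p] by simp
  qed
  show ?thesis using mod[of k] mod[of l] assms(2) unfolding cong_def by argo
qed

lemma zeta_ne_1: "p > 1 \<Longrightarrow> zeta p \<noteq> 1"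
  using zeta_pow_eq_1_iff[of p 1] by auto

lemma Zz_iff_poly: "x \<in> Zz p \<longleftrightarrow> (\<exists>P. x = poly (map_poly of_int P) (zeta p))"
proof
  assume "x \<in> Zz p"
  then obtain a n where "x = (\<Sum>k<n. of_int (a k) * zeta p ^ k)" unfolding Zz_def by blast
  then have "x = poly (map_poly of_int (\<Sum>k<n. monom (a k) k)) (zeta p)"
    by (simp add: poly_sum poly_monom)
  then show "\<exists>P. x = poly (map_poly of_int P) (zeta p)" by blast
next
  assume "\<exists>P. x = poly (map_poly of_int P) (zeta p)"
  then obtain P where "x = poly (map_poly of_int P) (zeta p)" by blast
  then have "x = (\<Sum>k<Suc (degree P). of_int (coeff P k) * zeta p ^ k)"
    by (simp add: poly_altdef lessThan_Suc_atMost degree_map_poly coeff_map_poly)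
  then show "x \<in> Zz p" unfolding Zz_def by blast
qed

lemma comm_subring_Zz: "comm_subring (Zz p)"
proof
  fix x y assume "x \<in> Zz p" "y \<in> Zz p"
  then obtain P Q where "x = poly (map_poly of_int P) (zeta p)" "y = poly (map_poly of_int Q) (zeta p)"
    unfolding Zz_iff_poly by blast
  then show "x + y \<in> Zz p" "x * y \<in> Zz p"
    unfolding Zz_iff_poly by (metis map_poly_of_int_add poly_add, metis map_poly_of_int_mult poly_mult)
next
  fix x assume "x \<in> Zz p"
  then show "- x \<in> Zz p" unfolding Zz_iff_poly by (metis map_poly_of_int_diff diff_0 poly_minus map_poly_0)
next
  show "of_int c \<in> Zz p" for c unfolding Zz_iff_poly by (rule exI[of _ "[:c:]"]) simp
qed

interpretation Zz: comm_subring "Zz p"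
  by (rule comm_subring_Zz)

lemma zeta_in_Zz: "zeta p \<in> Zz p"
  unfolding Zz_iff_poly by (rule exI[of _ "[:0, 1:]"]) simp

lemma Zz_subset_Zzp: "Zz p \<subseteq> Zzp p"
  unfolding Zzp_def by (force intro: exI[of _ 0])

lemma ZzpE:
  assumes "x \<in> Zzp p"
  obtains y n where "y \<in> Zz p" "x = y / of_nat p ^ n"
  using assms unfolding Zzp_def by blast

lemma ZzpI: "y \<in> Zz p \<Longrightarrow> y / of_nat p ^ n \<in> Zzp p"
  unfolding Zzp_def by blast

lemma comm_subring_Zzp:
  assumes "p > 0"
  shows "comm_subring (Zzp p)"
proof
  fix x y assume "x \<in> Zzp p" "y \<in> Zzp p"
  then obtain a m b n where ab: "a \<in> Zz p" "b \<in> Zz p"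
    and x: "x = a / of_nat p ^ m" and y: "y = b / of_nat p ^ n"
    by (elim ZzpE)
  have "x + y = (a * of_nat p ^ n + b * of_nat p ^ m) / of_nat p ^ (m + n)"
    using assms by (simp add: x y field_simps power_add)
  then show "x + y \<in> Zzp p"
    using ab by (auto intro!: ZzpI Zz.add_closed Zz.mult_closed Zz.power_closed Zz.of_nat_closed)
  have "x * y = (a * b) / of_nat p ^ (m + n)" by (simp add: x y power_add)
  then show "x * y \<in> Zzp p" using ab by (auto intro!: ZzpI Zz.mult_closed)
next
  fix x assume "x \<in> Zzp p"
  then show "- x \<in> Zzp p" by (elim ZzpE) (metis ZzpI Zz.uminus_closed minus_divide_left)
next
  show "of_int c \<in> Zzp p" for c using Zz_subset_Zzp Zz.of_int_closed by blast
qed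

lemma inverse_p_in_Zzp: "1 / of_nat p \<in> Zzp p"
  using ZzpI[OF Zz.one_closed, of p 1] by simp

lemma frobenius_subring_Zzp:
  assumes p: "prime p" and q: "prime q" and pq: "p \<noteq> q"
  shows "frobenius_subring (Zzp p) q (p - 1)"
proof -
  have p0: "p > 0" and p1: "p > 1" using prime_gt_1_nat[OF p] by auto
  interpret comm_subring "Zzp p" by (rule comm_subring_Zzp[OF p0])
  let ?N = "q ^ (p - 1)"
  have "[?N = 1] (mod p)"
    using p q pq by (intro fermat_little) (auto dest: primes_dvd_imp_eq)
  then have zeta_fixed: "zeta p ^ ?N = zeta p" using zeta_pow_cong[OF p0] by fastforce
  have inverse_fixed: "cong_mod (of_nat q) ((1 / of_nat p) ^ ?N) (1 / of_nat p)"
    by (rule cong_mod_power_inverse[where u = "of_nat p", OF _ inverse_p_in_Zzp])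
      (use frobenius_of_nat[OF q, of p "p - 1"] p0 in simp_all)
  show ?thesis
  proof (unfold_locales)
    show "prime q" "p - 1 > 0" using q p1 by auto
    fix x assume "x \<in> Zzp p"
    then obtain P n where x: "x = poly (map_poly of_int P) (zeta p) * (1 / of_nat p) ^ n"
      by (elim ZzpE) (auto simp: Zz_iff_poly field_simps)
    have zeta: "zeta p \<in> Zzp p" using zeta_in_Zz Zz_subset_Zzp by blast
    have "cong_mod (of_nat q) (poly (map_poly of_int P) (zeta p) ^ ?N) (poly (map_poly of_int P) (zeta p))"
      using zeta zeta_fixed by (intro frobenius_poly q) auto
    moreover have "cong_mod (of_nat q) (((1 / of_nat p) ^ ?N) ^ n) ((1 / of_nat p) ^ n)"
      by (rule cong_mod_power[OF inverse_fixed]) (simp_all add: power_closed inverse_p_in_Zzp)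
    ultimately have "cong_mod (of_nat q) (poly (map_poly of_int P) (zeta p) ^ ?N * ((1 / of_nat p) ^ ?N) ^ n)
        (poly (map_poly of_int P) (zeta p) * (1 / of_nat p) ^ n)"
      by (rule cong_mod_mult) (simp_all add: power_closed poly_of_int_closed zeta inverse_p_in_Zzp)
    then show "cong_mod (of_nat q) (x ^ ?N) x"
      unfolding x by (simp add: power_mult_distrib mult.commute flip: power_mult)
  qed
qed

section \<open>The cyclotomic unit \<open>1 + \<zeta>\<^sup>q\<close> and the set \<open>H'\<close>\<close>

lemma Qz_clear_denominator:
  assumes "\<delta> \<in> Qz p"
  obtains N :: nat where "N > 0" "of_nat N * \<delta> \<in> Zz p"
proof -
  obtain a n where \<delta>: "\<delta> = (\<Sum>k<n. of_rat (a k) * zeta p ^ k)" using assms unfolding Qz_def by blast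
  have "\<exists>N::nat. N > 0 \<and> of_nat N * (\<Sum>k<n. of_rat (a k) * zeta p ^ k) \<in> Zz p"
  proof (induction n)
    case 0
    show ?case by (intro exI[of _ 1]) (simp add: Zz.zero_closed)
  next
    case (Suc n)
    then obtain N :: nat where N: "N > 0" "of_nat N * (\<Sum>k<n. of_rat (a k) * zeta p ^ k) \<in> Zz p"
      by blast
    obtain u d where ud: "quotient_of (a n) = (u, d)" by (metis surj_pair)
    have d: "d > 0" using quotient_of_denom_pos[OF ud] .
    have an: "(of_rat (a n) :: complex) = of_int u / of_int d"
      using quotient_of_div[OF ud] by (simp add: of_rat_divide)
    have "of_nat (N * nat d) * (\<Sum>k<Suc n. of_rat (a k) * zeta p ^ k) =
        of_int d * (of_nat N * (\<Sum>k<n. of_rat (a k) * zeta p ^ k)) + of_nat N * of_int u * zeta p ^ n"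
      using d by (simp add: an field_simps)
    also have "\<dots> \<in> Zz p"
      by (rule Zz.add_closed[OF Zz.mult_closed[OF Zz.of_int_closed N(2)]])
        (intro Zz.mult_closed Zz.of_int_closed Zz.of_nat_closed Zz.power_closed zeta_in_Zz)
    finally show ?case using N(1) d by (intro exI[of _ "N * nat d"]) simp
  qed
  then show ?thesis using that unfolding \<delta> by blast
qed

text \<open>\<open>1 + \<zeta>^n = (1 - \<zeta>^(2n)) / (1 - \<zeta>^n)\<close>, with inverse
  \<open>(1 - \<zeta>^n) / (1 - \<zeta>^(2n)) = \<Sum>k<(p+1)/2. \<zeta>^(2nk)\<close> because \<open>\<zeta>^(n(p+1)) = \<zeta>^n\<close>.\<close>
lemma one_plus_zeta_power_in_Ccyc:
  assumes p: "prime p" "odd p" and n: "\<not> p dvd n"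
  shows "1 + zeta p ^ n \<in> Ccyc p"
proof -
  have p0: "p > 0" using prime_gt_0_nat[OF p(1)] .
  interpret comm_subring "Zzp p" by (rule comm_subring_Zzp[OF p0])
  define z where "z = zeta p"
  have z: "z \<in> Zzp p" unfolding z_def using zeta_in_Zz Zz_subset_Zzp by blast
  have zn: "z ^ n \<noteq> 1" unfolding z_def zeta_pow_eq_1_iff[OF p0] using n .
  have "\<not> p dvd 2"
    using p by (metis dvd_refl even_iff_mod_2_eq_zero primes_dvd_imp_eq two_is_prime_nat)
  then have z2n: "z ^ (2 * n) \<noteq> 1"
    unfolding z_def zeta_pow_eq_1_iff[OF p0] using p(1) n by (simp add: prime_dvd_mult_iff)
  have factor: "1 - z ^ (2 * n) = (1 - z ^ n) * (1 + z ^ n)"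
    by (simp add: power_mult algebra_simps power2_eq_square)
  define v where "v = (\<Sum>k<(p + 1) div 2. (z ^ (2 * n)) ^ k)"
  have "2 * ((p + 1) div 2) = p + 1" using p(2) by simp
  then have "(z ^ (2 * n)) ^ ((p + 1) div 2) = (z ^ p) ^ n * z ^ n"
    by (metis (no_types, lifting) mult.assoc mult.commute power_add power_mult mult.right_neutral distrib_left)
  also have "z ^ p = 1" unfolding z_def zeta_pow_eq_1_iff[OF p0] by simp
  finally have "(1 - z ^ (2 * n)) * v = 1 - z ^ n"
    unfolding v_def using z2n by (simp add: geometric_sum field_simps)
  then have inverse: "(1 + z ^ n) * v = 1"
    using zn unfolding factor by (simp add: mult.assoc)
  show ?thesis
    unfolding Ccyc_def Eunits_def z_def[symmetric]
  proof (intro CollectI conjI bexI)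
    show "1 + z ^ n \<in> Zzp p" using z by (intro add_closed one_closed power_closed)
    show "v \<in> Zzp p" unfolding v_def using z by (intro sum_closed power_closed)
    show "(1 + z ^ n) * v = 1" by (rule inverse)
    show "\<exists>i j \<omega> k. 1 - z ^ j \<noteq> 0 \<and> (\<exists>m>0. \<omega> ^ m = 1) \<and>
        1 + z ^ n = (1 - z ^ i) / (1 - z ^ j) * \<omega> * (1 - z) powi k"
      using zn by (intro exI[of _ "2 * n"] exI[of _ n] exI[of _ 1] exI[of _ 0]) (auto simp: factor)
  qed
qed

text \<open>With \<open>N \<delta> \<in> \<int>[\<zeta>]\<close> and \<open>N = q^a M\<close>, \<open>q \<nmid> M\<close>, descent shows that \<open>N \<delta>\<close> is divisible by \<open>q^a\<close>.\<close>
lemma Qz_q_integral: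
  assumes p: "prime p" and q: "prime q" and pq: "p \<noteq> q"
    and \<delta>: "\<delta> \<in> Qz p" and unit: "\<alpha> * v = 1" "v \<in> Zzp p" and power: "\<alpha> * \<delta> ^ q \<in> Zzp p"
  obtains M where "\<not> q dvd M" "of_nat M * \<delta> \<in> Zzp p"
proof -
  interpret frobenius_subring "Zzp p" q "p - 1" by (rule frobenius_subring_Zzp[OF p q pq])
  obtain N :: nat where N: "N > 0" "of_nat N * \<delta> \<in> Zz p" using \<delta> by (rule Qz_clear_denominator)
  define a where "a = multiplicity q N"
  obtain M where NM: "N = q ^ a * M" and M: "\<not> q dvd M"
    using multiplicity_decompose'[of N q] N(1) prime_gt_1_nat[OF q] unfolding a_def by auto
  have "\<alpha> * (of_nat N * \<delta>) ^ q = (of_nat q) ^ (a * q) * (of_nat M ^ q * (\<alpha> * \<delta> ^ q))"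
    unfolding NM by (simp add: power_mult_distrib power_mult[symmetric] mult_ac)
  moreover have "of_nat N * \<delta> \<in> Zzp p" using N(2) Zz_subset_Zzp by blast
  ultimately obtain e where "e \<in> Zzp p" "of_nat N * \<delta> = (of_nat q) ^ a * e"
    using qth_power_divisible[OF unit] power by (metis mult_closed power_closed of_nat_closed)
  moreover have "(of_nat q :: complex) ^ a \<noteq> 0" using prime_gt_0_nat[OF q] by simp
  ultimately have "of_nat M * \<delta> \<in> Zzp p"
    using prime_gt_0_nat[OF q] unfolding NM by (simp add: mult.assoc)
  then show ?thesis using that M by blast
qed

text \<open>For \<open>M\<close> as in \<open>Qz_q_integral\<close>, take \<open>e = M \<delta>\<close> and \<open>b = M \<beta>\<close>.\<close>
lemma in_H'_unit_representative:
  assumes p: "prime p" and q: "prime q" and pq: "p \<noteq> q"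
    and H: "in_H' p q \<alpha>" and unit: "\<alpha> * v = 1" "v \<in> Zzp p"
  obtains e b b' where "e \<in> Zzp p" "b \<in> Zzp p" "b' \<in> Zzp p"
    "comm_subring.cong_mod (Zzp p) ((of_nat q)^2) (\<alpha> * e ^ q) (b ^ q)"
    "comm_subring.cong_mod (Zzp p) ((of_nat q)^2) (b * b') 1"
proof -
  interpret comm_subring "Zzp p" by (rule comm_subring_Zzp) (use prime_gt_0_nat[OF p] in simp)
  obtain \<delta> \<beta> \<gamma> \<beta>' \<eta> where \<delta>: "\<delta> \<in> Qz p" and \<beta>\<gamma>: "\<beta> \<in> Zzp p" "\<gamma> \<in> Zzp p"
    and rep: "\<alpha> * \<delta> ^ q = \<beta> ^ q + (of_nat q)^2 * \<gamma>"
    and \<beta>': "\<beta>' \<in> Zzp p" "\<eta> \<in> Zzp p" "\<beta> * \<beta>' - 1 = (of_nat q)^2 * \<eta>"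
    using H unfolding in_H'_def by blast
  have "\<alpha> * \<delta> ^ q \<in> Zzp p" unfolding rep using \<beta>\<gamma> by (intro add_closed mult_closed power_closed of_nat_closed)
  then obtain M where M: "\<not> q dvd M" and e: "of_nat M * \<delta> \<in> Zzp p"
    using Qz_q_integral[OF p q pq \<delta> unit] by blast
  have "\<alpha> * (of_nat M * \<delta>) ^ q - (of_nat M * \<beta>) ^ q = of_nat M ^ q * (\<alpha> * \<delta> ^ q - \<beta> ^ q)"
    by (simp add: power_mult_distrib algebra_simps)
  also have "\<dots> = (of_nat q)^2 * (of_nat M ^ q * \<gamma>)" unfolding rep by (simp add: algebra_simps)
  finally have "\<alpha> * (of_nat M * \<delta>) ^ q - (of_nat M * \<beta>) ^ q = (of_nat q)^2 * (of_nat M ^ q * \<gamma>)" .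
  then have cong_e: "cong_mod ((of_nat q)^2) (\<alpha> * (of_nat M * \<delta>) ^ q) ((of_nat M * \<beta>) ^ q)"
    using \<beta>\<gamma> by (intro cong_modI[of "of_nat M ^ q * \<gamma>"] mult_closed power_closed of_nat_closed)
  have "coprime M (q ^ 2)" using prime_imp_coprime[OF q M] by (simp add: coprime_commute)
  then obtain c where "cong_mod (of_nat (q ^ 2)) (of_nat M * of_int c) 1"
    by (rule of_nat_invertible_mod)
  moreover have "cong_mod ((of_nat q)^2) (\<beta> * \<beta>') 1" using \<beta>' by (intro cong_modI)
  ultimately have "cong_mod ((of_nat q)^2) ((of_nat M * of_int c) * (\<beta> * \<beta>')) (1 * 1)"
    using \<beta>\<gamma> \<beta>' by (intro cong_mod_mult) (simp_all add: one_closed mult_closed)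
  then have "cong_mod ((of_nat q)^2) ((of_nat M * \<beta>) * (of_int c * \<beta>')) 1"
    by (simp add: ac_simps)
  moreover have "of_nat M * \<beta> \<in> Zzp p" "of_int c * \<beta>' \<in> Zzp p"
    using \<beta>\<gamma> \<beta>' by (simp_all add: mult_closed of_nat_closed of_int_closed)
  ultimately show ?thesis using that e cong_e by blast
qed

lemma binomial_not_cong_Zzp:
  assumes p: "prime p" and q: "prime q" and qp: "q + 2 \<le> p"
  shows "\<not> comm_subring.cong_mod (Zzp p) ((of_nat q)^2) ((1 + zeta p) ^ q) (1 + zeta p ^ q)"
proof -
  have p1: "p > 1" using prime_gt_1_nat[OF p] .
  interpret comm_subring "Zzp p" by (rule comm_subring_Zzp) (use p1 in simp)
  show ?thesis
  proof
    assume "cong_mod ((of_nat q)^2) ((1 + zeta p) ^ q) (1 + zeta p ^ q)"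
    then obtain w where "w \<in> Zzp p" "(1 + zeta p) ^ q - (1 + zeta p ^ q) = (of_nat q)^2 * w"
      by (rule cong_modE)
    moreover obtain W m where "w = poly (map_poly of_int W) (zeta p) / of_nat p ^ m"
      using \<open>w \<in> Zzp p\<close> by (elim ZzpE) (auto simp: Zz_iff_poly)
    ultimately have "of_nat p ^ m * ((1 + zeta p) ^ q - 1 - zeta p ^ q) =
        (of_nat q)^2 * poly (map_poly of_int W) (zeta p)"
      using p1 by (simp add: field_simps)
    moreover have "zeta p ^ p = 1" using p1 by (simp add: zeta_pow_eq_1_iff)
    ultimately show False
      using binomial_not_divisible[OF p q qp _ zeta_ne_1[OF p1]] by blast
  qed
qed

theorem mainTheorem17:
  fixes p q :: nat
  assumes "prime p" and "prime q" and "odd p" and "odd q" and "p \<noteq> q"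
    and "Ccyc p = Ccyc p \<inter> Eprime p q"
  shows "p < q"
proof (rule ccontr)
  assume "\<not> p < q"
  then have qp: "q + 2 \<le> p" using assms(3-5) by presburger
  interpret frobenius_subring "Zzp p" q "p - 1"
    by (rule frobenius_subring_Zzp[OF assms(1,2,5)])
  define \<alpha> where "\<alpha> = 1 + zeta p ^ q"
  have "\<not> p dvd q" using assms(1,2,5) primes_dvd_imp_eq by blast
  then have "\<alpha> \<in> Ccyc p" unfolding \<alpha>_def by (rule one_plus_zeta_power_in_Ccyc[OF assms(1,3)])
  then have \<alpha>: "\<alpha> \<in> Zzp p" "in_H' p q \<alpha>" and "\<exists>v\<in>Zzp p. \<alpha> * v = 1"
    using assms(6) unfolding Eprime_def Eunits_def by blast+
  then obtain v where v: "v \<in> Zzp p" "\<alpha> * v = 1" by blast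
  obtain e b b' where ebb': "e \<in> Zzp p" "b \<in> Zzp p" "b' \<in> Zzp p"
    "cong_mod ((of_nat q)^2) (\<alpha> * e ^ q) (b ^ q)" "cong_mod ((of_nat q)^2) (b * b') 1"
    using in_H'_unit_representative[OF assms(1,2,5) \<alpha>(2) v(2,1)] by blast
  have zeta: "zeta p \<in> Zzp p" using zeta_in_Zz Zz_subset_Zzp by blast
  have "cong_mod (of_nat q) \<alpha> ((1 + zeta p) ^ q)"
    unfolding \<alpha>_def using frobenius_add[OF prime_q one_closed zeta] by (simp add: cong_mod_sym)
  then have "cong_mod ((of_nat q)^2) ((1 + zeta p) ^ q) \<alpha>"
    using \<alpha>(1) zeta ebb' by (intro qth_power_cong_lift) (auto intro: add_closed one_closed)
  then show False
    using binomial_not_cong_Zzp[OF assms(1,2) qp] unfolding \<alpha>_def by blast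
qed

end
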